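(* If $f$ is a harmonic polynomial, i.e. $f(z)=p(z)+\overline{q(z)}$ with $p,q$ polynomials in $z$, then $\operatorname{int}(f(S)\cup C(f,\infty))=\varnothing$.
   Context: Writing $f=u+iv$, $J_f=u_xv_y-u_yv_x$ and $S=\{z\in\mathbb{C}: J_f(z)=0\}$. $C(f,\infty)$ is the set of finite points $\zeta\in\mathbb{C}$ for which there is a sequence $(z_n)$ with $|z_n|\to\infty$ and $f(z_n)\to\zeta$. *)

theory Defs
  imports "HOL-Analysis.Analysis" "HOL-Computational_Algebra.Polynomial"
begin

definition u_x :: "(complex \<Rightarrow> complex) \<Rightarrow> complex \<Rightarrow> real" where
  "u_x f z = deriv (\<lambda>t::real. Re (f (z + of_real t))) 0"
definition u_y :: "(complex \<Rightarrow> complex) \<Rightarrow> complex \<Rightarrow> real" where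
  "u_y f z = deriv (\<lambda>t::real. Re (f (z + \<i> * of_real t))) 0"
definition v_x :: "(complex \<Rightarrow> complex) \<Rightarrow> complex \<Rightarrow> real" where
  "v_x f z = deriv (\<lambda>t::real. Im (f (z + of_real t))) 0"
definition v_y :: "(complex \<Rightarrow> complex) \<Rightarrow> complex \<Rightarrow> real" where
  "v_y f z = deriv (\<lambda>t::real. Im (f (z + \<i> * of_real t))) 0"

definition jacobian_det :: "(complex \<Rightarrow> complex) \<Rightarrow> complex \<Rightarrow> real" where
  "jacobian_det f z = u_x f z * v_y f z - u_y f z * v_x f z"

definition crit_set :: "(complex \<Rightarrow> complex) \<Rightarrow> complex set" where
  "crit_set f = {z. jacobian_det f z = 0}"

definition cluster_set_inf :: "(complex \<Rightarrow> complex) \<Rightarrow> complex set" where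
  "cluster_set_inf f = {\<zeta>. \<exists>zs :: nat \<Rightarrow> complex.
      filterlim (\<lambda>n. norm (zs n)) at_top sequentially \<and> (\<lambda>n. f (zs n)) \<longlonglongrightarrow> \<zeta>}"

end

theory Submission
  imports Defs
begin

text \<open>
  Viewed as a map of the real plane, f is smooth, so its critical values f(S) form a null set
  by Sard's lemma. For the cluster set, note that Re f, Im f and the coordinate x = Re z are
  real polynomials in (x, y); three polynomials in two variables are algebraically dependent
  (count monomials), so x is a root of \<Sum>k\<le>K. A k (f z) * x^k = 0 with A K \<noteq> 0. If
  f (z n) \<rightarrow> w with A K w \<noteq> 0, Cauchy's root bound keeps Re (z n) bounded; likewise Im (z n).
  So C(f,\<infinity>) lies in the zero set of a nonzero real polynomial. An open set inside the union
  of a null set and such a zero set is empty: removing the zero set leaves an open null set,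
  and a polynomial vanishing on a ball is zero.
\<close>

section \<open>Critical values\<close>

definition vec_of_complex :: "complex \<Rightarrow> real^2" where
  "vec_of_complex z = vector [Re z, Im z]"

definition complex_of_vec :: "real^2 \<Rightarrow> complex" where
  "complex_of_vec v = Complex (v$1) (v$2)"

lemma complex_of_vec_of_complex [simp]: "complex_of_vec (vec_of_complex z) = z"
  by (simp add: complex_of_vec_def vec_of_complex_def complex_eq_iff)

lemma linear_vec_of_complex: "linear vec_of_complex"
  by (auto simp: vec_of_complex_def linear_iff vec_eq_iff forall_2)

lemma linear_complex_of_vec: "linear complex_of_vec"
  by (auto simp: complex_of_vec_def linear_iff complex_eq_iff)

text \<open>The library's Sard lemma \<open>baby_Sard\<close> is stated for \<open>real^'n\<close> only, hence the
  transport along \<open>vec_of_complex\<close>.\<close>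

lemma negligible_image_noninjective_derivative:
  fixes f :: "complex \<Rightarrow> complex"
  assumes der: "\<And>z. z \<in> S \<Longrightarrow> (f has_derivative f' z) (at z within S)"
    and noninj: "\<And>z. z \<in> S \<Longrightarrow> \<not> inj (f' z)"
  shows "negligible (f ` S)"
proof -
  define g where "g = vec_of_complex \<circ> f \<circ> complex_of_vec"
  define g' where "g' = (\<lambda>v. vec_of_complex \<circ> f' (complex_of_vec v) \<circ> complex_of_vec)"
  have neg: "negligible (g ` vec_of_complex ` S)"
  proof (rule baby_Sard)
    fix v assume "v \<in> vec_of_complex ` S"
    then obtain z where z: "z \<in> S" "v = vec_of_complex z" by blast
    have "(complex_of_vec has_derivative complex_of_vec) (at v within vec_of_complex ` S)"
      by (rule has_derivative_at_withinI[OF linear_imp_has_derivative[OF linear_complex_of_vec]])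
    moreover have "(f has_derivative f' z) (at (complex_of_vec v) within complex_of_vec ` vec_of_complex ` S)"
      using der[OF z(1)] z(2) by (simp add: image_image)
    ultimately have "(f \<circ> complex_of_vec has_derivative f' z \<circ> complex_of_vec) (at v within vec_of_complex ` S)"
      by (rule diff_chain_within)
    from bounded_linear.has_derivative[OF linear_vec_of_complex[unfolded linear_conv_bounded_linear] this]
    show "(g has_derivative g' v) (at v within vec_of_complex ` S)"
      unfolding g_def g'_def z(2) by (simp add: o_def)
    have "linear (g' v)"
      unfolding g'_def using has_derivative_linear[OF der[OF z(1)]] z
      by (intro linear_compose linear_vec_of_complex linear_complex_of_vec) auto
    moreover have "\<not> inj (g' v)"
      using noninj[OF z(1)] z
      by (auto simp: g'_def inj_def) (metis complex_of_vec_of_complex)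
    ultimately show "rank (matrix (g' v)) < CARD(2)"
      by (metis less_rank_noninjective matrix_vector_mul(2))
  qed simp
  have "negligible (complex_of_vec ` g ` vec_of_complex ` S)"
    by (rule negligible_differentiable_image_negligible[OF _ neg])
      (auto intro: linear_imp_differentiable_on linear_complex_of_vec)
  then show ?thesis by (simp add: g_def image_image)
qed

lemma jacobian_det_eq:
  assumes "(f has_derivative L) (at z)"
  shows "jacobian_det f z = Re (L 1) * Im (L \<i>) - Re (L \<i>) * Im (L 1)"
proof -
  have lin: "linear L" using has_derivative_linear[OF assms] .
  have scale: "L (d * of_real t) = of_real t * L d" for d t
    using linear_scale[OF lin, of t d] by (simp add: scaleR_conv_of_real mult.commute)
  have line: "((\<lambda>t::real. f (z + d * of_real t)) has_derivative (\<lambda>t. of_real t * L d)) (at 0)" for d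
  proof -
    have "((\<lambda>t::real. z + d * of_real t) has_derivative (\<lambda>t. d * of_real t)) (at 0)"
      by (auto intro!: derivative_eq_intros)
    from has_derivative_compose[OF this, of f L] assms show ?thesis
      by (simp add: scale)
  qed
  have "((\<lambda>t::real. Re (f (z + d * of_real t))) has_real_derivative Re (L d)) (at 0)"
    and "((\<lambda>t::real. Im (f (z + d * of_real t))) has_real_derivative Im (L d)) (at 0)" for d
    using bounded_linear.has_derivative[OF bounded_linear_Re line[of d]]
      bounded_linear.has_derivative[OF bounded_linear_Im line[of d]]
    by (simp_all add: has_field_derivative_def mult_commute_abs)
  from this[of 1, THEN DERIV_imp_deriv] this[of \<i>, THEN DERIV_imp_deriv]
  show ?thesis
    by (simp add: jacobian_det_def u_x_def u_y_def v_x_def v_y_def mult.commute)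
qed

lemma not_inj_if_jacobian_eq_0:
  fixes L :: "complex \<Rightarrow> complex"
  assumes lin: "linear L" and det: "Re (L 1) * Im (L \<i>) - Re (L \<i>) * Im (L 1) = 0"
  shows "\<not> inj L"
proof (cases "L 1 = 0")
  case True
  then show ?thesis using linear_0[OF lin] by (metis injD one_neq_zero)
next
  case False
  define r where "r = Re (L \<i> / L 1)"
  have "Im (L \<i> / L 1) = 0"
    using det by (simp add: Im_divide algebra_simps)
  then have "L \<i> / L 1 = of_real r"
    by (simp add: r_def complex_eq_iff)
  then have "L \<i> = r *\<^sub>R L 1"
    using False by (simp add: scaleR_conv_of_real field_simps)
  then have "L (\<i> - r *\<^sub>R 1) = L 0"
    by (simp add: linear_diff[OF lin] linear_scale[OF lin] linear_0[OF lin])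
  moreover have "\<i> - r *\<^sub>R 1 \<noteq> 0"
    by (simp add: complex_eq_iff)
  ultimately show ?thesis by (metis injD)
qed

lemma negligible_image_crit_set:
  assumes "\<And>z. f differentiable (at z)"
  shows "negligible (f ` crit_set f)"
proof -
  obtain f' where der: "\<And>z. (f has_derivative f' z) (at z)"
    using assms unfolding differentiable_def by metis
  show ?thesis
  proof (rule negligible_image_noninjective_derivative)
    fix z assume "z \<in> crit_set f"
    then show "\<not> inj (f' z)"
      using not_inj_if_jacobian_eq_0[OF has_derivative_linear[OF der]] jacobian_det_eq[OF der]
      by (simp add: crit_set_def)
  qed (rule has_derivative_at_withinI[OF der])
qed

lemma harmonic_poly_differentiable:
  "(\<lambda>z. poly p z + cnj (poly q z)) differentiable (at z)"
proof -
  have poly_diff: "poly r differentiable (at z)" for r :: "complex poly"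
    using has_field_derivative_imp_has_derivative[OF poly_DERIV] by (rule differentiableI)
  show ?thesis
    using poly_diff[of p]
      differentiable_compose[OF bounded_linear_imp_differentiable[OF bounded_linear_cnj] poly_diff[of q]]
    by (rule differentiable_add)
qed

section \<open>Real polynomials in two variables\<close>

text \<open>A polynomial in x = Re z and y = Im z is encoded as a polynomial in y whose coefficients
  are polynomials in x.\<close>

definition poly2 :: "real poly poly \<Rightarrow> complex \<Rightarrow> real" where
  "poly2 P z = poly (poly P [:Im z:]) (Re z)"

definition bidegree_le :: "nat \<Rightarrow> real poly poly \<Rightarrow> bool" where
  "bidegree_le m P \<longleftrightarrow> degree P \<le> m \<and> (\<forall>j. degree (coeff P j) \<le> m)"

lemma poly2_simps [simp]:
  "poly2 0 z = 0"
  "poly2 (P + Q) z = poly2 P z + poly2 Q z"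
  "poly2 (P - Q) z = poly2 P z - poly2 Q z"
  "poly2 (P * Q) z = poly2 P z * poly2 Q z"
  "poly2 (P ^ k) z = poly2 P z ^ k"
  "poly2 (smult [:c:] P) z = c * poly2 P z"
  "poly2 (sum F A) z = (\<Sum>a\<in>A. poly2 (F a) z)"
  "poly2 (monom (monom c i) j) z = c * Re z ^ i * Im z ^ j"
  by (simp_all add: poly2_def poly_sum poly_monom)

lemma poly2_eq_poly_map_poly: "poly2 P z = poly (map_poly (\<lambda>a. poly a (Re z)) P) (Im z)"
  by (induction P rule: pCons_induct) (simp_all add: poly2_def map_poly_pCons)

lemma isCont_poly2: "isCont (poly2 P) z"
proof (induction P rule: pCons_induct)
  case (pCons a P)
  have "poly2 (pCons a P) = (\<lambda>z. poly a (Re z) + Im z * poly2 P z)"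
    by (simp add: poly2_def fun_eq_iff)
  then show ?case using pCons.IH by (auto intro!: continuous_intros)
qed (simp add: poly2_def)

definition poly2_Re :: "real poly poly" where "poly2_Re = [:[:0, 1:]:]"
definition poly2_Im :: "real poly poly" where "poly2_Im = [:0, 1:]"

lemma poly2_coordinates [simp]:
  "poly2 poly2_Re z = Re z" "poly2 poly2_Im z = Im z" "poly2 [:[:c:]:] z = c"
  by (simp_all add: poly2_def poly2_Re_def poly2_Im_def)

lemma bidegree_le_coordinates [simp]:
  "bidegree_le 1 poly2_Re" "bidegree_le 1 poly2_Im" "bidegree_le m [:[:c:]:]"
  by (simp_all add: bidegree_le_def poly2_Re_def poly2_Im_def coeff_pCons split: nat.split)

lemma bidegree_le_mono: "bidegree_le m P \<Longrightarrow> m \<le> m' \<Longrightarrow> bidegree_le m' P"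
  unfolding bidegree_le_def by (meson order_trans)

lemma bidegree_le_add: "bidegree_le m P \<Longrightarrow> bidegree_le m Q \<Longrightarrow> bidegree_le m (P + Q)"
  unfolding bidegree_le_def by (metis coeff_add degree_add_le)

lemma bidegree_le_diff: "bidegree_le m P \<Longrightarrow> bidegree_le m Q \<Longrightarrow> bidegree_le m (P - Q)"
  unfolding bidegree_le_def by (metis coeff_diff degree_diff_le)

lemma bidegree_le_mult:
  assumes "bidegree_le m P" "bidegree_le m' Q"
  shows "bidegree_le (m + m') (P * Q)"
proof -
  have "degree (coeff (P * Q) j) \<le> m + m'" for j
    unfolding coeff_mult using assms
    by (intro degree_sum_le) (auto simp: bidegree_le_def intro: order_trans[OF degree_mult_le] add_mono)
  moreover have "degree (P * Q) \<le> m + m'"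
    using assms by (auto simp: bidegree_le_def intro: order_trans[OF degree_mult_le] add_mono)
  ultimately show ?thesis by (simp add: bidegree_le_def)
qed

lemma bidegree_le_power: "bidegree_le m P \<Longrightarrow> bidegree_le (m * k) (P ^ k)"
proof (induction k)
  case 0
  then show ?case by (simp add: bidegree_le_def coeff_pCons split: nat.split)
next
  case (Suc k)
  then show ?case using bidegree_le_mult[of m P "m * k" "P ^ k"] by (simp add: add.commute)
qed

lemma poly2_Re_Im_poly:
  fixes p :: "complex poly"
  obtains R I where "bidegree_le (degree p) R" "bidegree_le (degree p) I"
    "\<And>z. poly2 R z = Re (poly p z)" "\<And>z. poly2 I z = Im (poly p z)"
proof (induction p arbitrary: thesis rule: pCons_induct)
  case 0
  show ?case by (rule 0[of 0 0]) (simp_all add: bidegree_le_def)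
next
  case (pCons a p)
  obtain R I where RI: "bidegree_le (degree p) R" "bidegree_le (degree p) I"
    "\<And>z. poly2 R z = Re (poly p z)" "\<And>z. poly2 I z = Im (poly p z)"
    using pCons.IH by blast
  show ?case
  proof (cases "p = 0")
    case True
    then show ?thesis by (intro pCons.prems[of "[:[:Re a:]:]" "[:[:Im a:]:]"]) auto
  next
    case False
    have bd: "bidegree_le (Suc (degree p)) (poly2_Re * S)" "bidegree_le (Suc (degree p)) (poly2_Im * S)"
      if "bidegree_le (degree p) S" for S
      using bidegree_le_mult[OF bidegree_le_coordinates(1) that]
        bidegree_le_mult[OF bidegree_le_coordinates(2) that] by simp_all
    show ?thesis
    proof (rule pCons.prems)
      show "bidegree_le (degree (pCons a p)) ([:[:Re a:]:] + poly2_Re * R - poly2_Im * I)"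
        "bidegree_le (degree (pCons a p)) ([:[:Im a:]:] + poly2_Re * I + poly2_Im * R)"
        using False RI(1,2) by (auto intro!: bidegree_le_add bidegree_le_diff bd)
      show "poly2 ([:[:Re a:]:] + poly2_Re * R - poly2_Im * I) z = Re (poly (pCons a p) z)"
        "poly2 ([:[:Im a:]:] + poly2_Re * I + poly2_Im * R) z = Im (poly (pCons a p) z)" for z
        using RI(3,4) by simp_all
    qed
  qed
qed

lemma poly_eq_0_if_infinite_roots:
  fixes p :: "'a::idom poly"
  assumes "infinite A" "\<And>x. x \<in> A \<Longrightarrow> poly p x = 0"
  shows "p = 0"
  using assms poly_roots_finite finite_subset[of A "{x. poly p x = 0}"] by blast

lemma poly2_eq_0_on_ball:
  assumes "r > 0" and zero: "\<And>w. w \<in> ball c r \<Longrightarrow> poly2 E w = 0"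
  shows "E = 0"
proof -
  define X where "X = {Re c - r/2 <..< Re c + r/2}"
  define Y where "Y = {Im c - r/2 <..< Im c + r/2}"
  have inf: "infinite X" "infinite Y" using \<open>r > 0\<close> by (simp_all add: X_def Y_def)
  have in_ball: "Complex x y \<in> ball c r" if "x \<in> X" "y \<in> Y" for x y
  proof -
    have "dist c (Complex x y) \<le> \<bar>Re c - x\<bar> + \<bar>Im c - y\<bar>"
      using cmod_le[of "c - Complex x y"] by (simp add: dist_norm)
    also have "\<dots> < r" using that by (auto simp: X_def Y_def abs_if)
    finally show ?thesis by simp
  qed
  have "poly (coeff E k) x = 0" if "x \<in> X" for k x
  proof -
    have "map_poly (\<lambda>a. poly a x) E = 0"
      using inf(2) zero[OF in_ball[OF that]]
      by (intro poly_eq_0_if_infinite_roots[of Y]) (auto simp: poly2_eq_poly_map_poly)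
    then show ?thesis by (metis coeff_0 coeff_map_poly poly_0)
  qed
  then have "coeff E k = 0" for k
    using poly_eq_0_if_infinite_roots[OF inf(1)] by blast
  then show ?thesis by (simp add: poly_eq_iff)
qed

lemma homogeneous_linear_system_nontrivial_solution:
  fixes M :: "'e \<Rightarrow> 'i \<Rightarrow> real"
  assumes "finite E" "finite I" "card E < card I"
  shows "\<exists>c. (\<exists>i\<in>I. c i \<noteq> 0) \<and> (\<forall>e\<in>E. (\<Sum>i\<in>I. M e i * c i) = 0)"
  using assms
proof (induction E arbitrary: I M rule: finite_induct)
  case empty
  then obtain i where "i \<in> I" by fastforce
  then show ?case by (intro exI[of _ "\<lambda>_. 1"]) auto
next
  case (insert e E)
  show ?case
  proof (cases "\<forall>i\<in>I. M e i = 0")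
    case True
    have "card E < card I" using insert by simp
    then obtain c where c: "\<exists>i\<in>I. c i \<noteq> 0" "\<forall>e\<in>E. (\<Sum>i\<in>I. M e i * c i) = 0"
      using insert.IH[of I M] insert.prems by blast
    then show ?thesis using True by (intro exI[of _ c]) auto
  next
    case False
    text \<open>Gaussian elimination: solve equation e for an unknown i0 it involves and recurse on
      the remaining equations, with i0 eliminated.\<close>
    then obtain i0 where i0: "i0 \<in> I" "M e i0 \<noteq> 0" by blast
    define I' where "I' = I - {i0}"
    define M' where "M' = (\<lambda>e' i. M e' i - M e' i0 * M e i / M e i0)"
    have "card I' = card I - 1" using i0 insert.prems by (simp add: I'_def)
    then have "card E < card I'" using insert by simp
    then obtain c' where c': "\<exists>i\<in>I'. c' i \<noteq> 0" "\<forall>e'\<in>E. (\<Sum>i\<in>I'. M' e' i * c' i) = 0"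
      using insert.IH[of I' M'] insert.prems by (auto simp: I'_def)
    define c where "c = (\<lambda>i. if i = i0 then - (\<Sum>j\<in>I'. M e j * c' j) / M e i0 else c' i)"
    have sum_I: "(\<Sum>i\<in>I. h i) = h i0 + (\<Sum>i\<in>I'. h i)" for h :: "'i \<Rightarrow> real"
      using i0 insert.prems by (simp add: I'_def sum.remove)
    have cI': "(\<Sum>i\<in>I'. h i * c i) = (\<Sum>i\<in>I'. h i * c' i)" for h
      by (rule sum.cong) (auto simp: c_def I'_def)
    have "(\<Sum>i\<in>I. M e i * c i) = 0"
      unfolding sum_I cI' using i0 by (simp add: c_def)
    moreover have "(\<Sum>i\<in>I. M e' i * c i) = 0" if "e' \<in> E" for e'
    proof -
      have "(\<Sum>i\<in>I. M e' i * c i) = M e' i0 * c i0 + (\<Sum>i\<in>I'. M e' i * c' i)"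
        unfolding sum_I cI' ..
      also have "\<dots> = (\<Sum>i\<in>I'. M' e' i * c' i)"
        using i0 by (simp add: c_def M'_def sum_subtractf sum_distrib_left sum_divide_distrib
            left_diff_distrib algebra_simps)
      also have "\<dots> = 0" using c' that by blast
      finally show ?thesis .
    qed
    moreover have "\<exists>i\<in>I. c i \<noteq> 0" using c' by (auto simp: c_def I'_def)
    ultimately show ?thesis by (intro exI[of _ c]) auto
  qed
qed

lemma bidegree_le_linearly_dependent:
  assumes "finite I" "(m + 1)^2 < card I" "\<And>t. t \<in> I \<Longrightarrow> bidegree_le m (G t)"
  shows "\<exists>c. (\<exists>t\<in>I. c t \<noteq> 0) \<and> (\<Sum>t\<in>I. smult [:c t:] (G t)) = 0"
proof -
  define E where "E = {..m} \<times> {..m}"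
  have "card E < card I" using assms(2) by (simp add: E_def power2_eq_square)
  then obtain c where c: "\<exists>t\<in>I. c t \<noteq> 0"
    and sol: "\<And>a b. (a, b) \<in> E \<Longrightarrow> (\<Sum>t\<in>I. coeff (coeff (G t) b) a * c t) = 0"
    using homogeneous_linear_system_nontrivial_solution[of E I "\<lambda>(a, b) t. coeff (coeff (G t) b) a"]
      assms(1) by (auto simp: E_def)
  have "coeff (coeff (\<Sum>t\<in>I. smult [:c t:] (G t)) b) a = 0" for a b
  proof (cases "a \<le> m \<and> b \<le> m")
    case True
    then show ?thesis using sol[of a b] by (simp add: E_def coeff_sum mult.commute)
  next
    case False
    have "coeff (coeff (G t) b) a = 0" if "t \<in> I" for t
    proof -
      have "degree (G t) \<le> m" "degree (coeff (G t) b) \<le> m"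
        using assms(3)[OF that] by (auto simp: bidegree_le_def)
      then show ?thesis using False by (metis coeff_0 coeff_eq_0 le_less_trans not_le)
    qed
    then show ?thesis by (simp add: coeff_sum)
  qed
  then show ?thesis using c by (auto simp: poly_eq_iff)
qed

lemma cube_square_less:
  assumes "1 \<le> (s::nat)"
  shows "(s^3 + 1)^2 < (s^2 + 1)^3"
proof -
  have "s^3 \<le> s^4" "0 < s^2" using assms by (simp_all add: power_increasing)
  moreover have "(s^3 + 1)^2 = s^6 + 2 * s^3 + 1" "(s^2 + 1)^3 = s^6 + 3 * s^4 + 3 * s^2 + 1"
    by (simp_all add: power2_eq_square power3_eq_cube algebra_simps power_add[symmetric] eval_nat_numeral)
  ultimately show ?thesis by linarith
qed

lemma power_products_linearly_dependent:
  assumes P: "bidegree_le n P" and Q: "bidegree_le n Q" and R: "bidegree_le n R"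
  shows "\<exists>D c. (\<exists>i\<le>D. \<exists>j\<le>D. \<exists>k\<le>D. c i j k \<noteq> 0) \<and>
    (\<Sum>i\<le>D. \<Sum>j\<le>D. \<Sum>k\<le>D. smult [:c i j k:] (P ^ i * Q ^ j * R ^ k)) = 0"
proof -
  text \<open>The (D+1)^3 products P^i Q^j R^k with i, j, k \<le> D have bidegree at most 3nD \<le> s^3,
    and the space of such polynomials has dimension (s^3+1)^2 < (D+1)^3.\<close>
  define s where "s = 3 * n + 1"
  define D where "D = s^2"
  define I where "I = {..D} \<times> {..D} \<times> {..D}"
  define G where "G = (\<lambda>(i, j, k). P ^ i * Q ^ j * R ^ k)"
  have "bidegree_le (s^3) (G t)" if t: "t \<in> I" for t
  proof -
    obtain i j k where t: "t = (i, j, k)" "i \<le> D" "j \<le> D" "k \<le> D"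
      using t by (cases t) (auto simp: I_def)
    have "bidegree_le (n * i + n * j + n * k) (G t)"
      unfolding t(1) G_def prod.case by (intro bidegree_le_mult bidegree_le_power P Q R)
    moreover have "n * i + n * j + n * k \<le> s^3"
    proof -
      have "n * i \<le> n * D" "n * j \<le> n * D" "n * k \<le> n * D"
        using t(2-4) by simp_all
      moreover have "s^3 = n * D + n * D + n * D + D"
        by (simp add: s_def D_def power3_eq_cube power2_eq_square algebra_simps)
      ultimately show ?thesis by linarith
    qed
    ultimately show ?thesis by (rule bidegree_le_mono)
  qed
  moreover have "(s^3 + 1)^2 < card I"
  proof -
    have "card I = (s^2 + 1)^3" by (simp add: I_def D_def card_cartesian_product power3_eq_cube)
    moreover have "1 \<le> s" by (simp add: s_def)
    ultimately show ?thesis using cube_square_less by presburger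
  qed
  ultimately obtain c where c: "\<exists>t\<in>I. c t \<noteq> 0" and dep: "(\<Sum>t\<in>I. smult [:c t:] (G t)) = 0"
    using bidegree_le_linearly_dependent[of I "s^3" G] by (auto simp: I_def)
  show ?thesis
  proof (rule exI[of _ D], rule exI[of _ "\<lambda>i j k. c (i, j, k)"], rule conjI)
    show "\<exists>i\<le>D. \<exists>j\<le>D. \<exists>k\<le>D. c (i, j, k) \<noteq> 0" using c by (auto simp: I_def)
    show "(\<Sum>i\<le>D. \<Sum>j\<le>D. \<Sum>k\<le>D. smult [:c (i, j, k):] (P ^ i * Q ^ j * R ^ k)) = 0"
      using dep by (simp add: I_def G_def sum.cartesian_product split_def)
  qed
qed

lemma obtain_leading_index:
  fixes D :: nat
  assumes "\<exists>k\<le>D. a k \<noteq> 0"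
  obtains K where "K \<le> D" "a K \<noteq> 0" "\<And>k. K < k \<Longrightarrow> k \<le> D \<Longrightarrow> a k = 0"
proof
  define K where "K = Max {k. k \<le> D \<and> a k \<noteq> 0}"
  have "K \<in> {k. k \<le> D \<and> a k \<noteq> 0}"
    using assms unfolding K_def by (intro Max_in) auto
  then show "K \<le> D" "a K \<noteq> 0" by auto
  show "a k = 0" if "K < k" "k \<le> D" for k
  proof (rule ccontr)
    assume "a k \<noteq> 0"
    then have "k \<le> K" using that(2) unfolding K_def by (intro Max_ge) auto
    with that(1) show False by simp
  qed
qed

lemma coeff_coeff_sum_monom:
  assumes "i \<le> D" "j \<le> D"
  shows "coeff (coeff (\<Sum>i'\<le>D. \<Sum>j'\<le>D. monom (monom (a i' j') i') j') j) i = a i j"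
proof -
  have "coeff (\<Sum>i'\<le>D. \<Sum>j'\<le>D. monom (monom (a i' j') i') j') j = (\<Sum>i'\<le>D. monom (a i' j) i')"
    using assms(2) by (simp add: coeff_sum coeff_monom)
  then show ?thesis using assms(1) by (simp add: coeff_sum coeff_monom)
qed

lemma poly2_algebraically_dependent:
  assumes "bidegree_le n P" "bidegree_le n Q" "bidegree_le n R"
  obtains K A where "A K \<noteq> 0"
    "\<And>z. (\<Sum>k\<le>K. poly2 (A k) (Complex (poly2 P z) (poly2 Q z)) * poly2 R z ^ k) = 0"
proof -
  obtain D c where c: "\<exists>i\<le>D. \<exists>j\<le>D. \<exists>k\<le>D. c i j k \<noteq> 0"
    and dep: "(\<Sum>i\<le>D. \<Sum>j\<le>D. \<Sum>k\<le>D. smult [:c i j k:] (P ^ i * Q ^ j * R ^ k)) = 0"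
    using power_products_linearly_dependent[OF assms] by blast
  define A where "A k = (\<Sum>i\<le>D. \<Sum>j\<le>D. monom (monom (c i j k) i) j)" for k
  have rel: "(\<Sum>k\<le>D. poly2 (A k) (Complex (poly2 P z) (poly2 Q z)) * poly2 R z ^ k) = 0" for z
  proof -
    let ?m = "\<lambda>i j k. c i j k * poly2 (P ^ i * Q ^ j * R ^ k) z"
    have "(\<Sum>k\<le>D. poly2 (A k) (Complex (poly2 P z) (poly2 Q z)) * poly2 R z ^ k)
        = (\<Sum>k\<le>D. \<Sum>i\<le>D. \<Sum>j\<le>D. ?m i j k)"
      by (simp add: A_def sum_distrib_left mult_ac)
    also have "\<dots> = (\<Sum>i\<le>D. \<Sum>k\<le>D. \<Sum>j\<le>D. ?m i j k)"
      by (rule sum.swap)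
    also have "\<dots> = (\<Sum>i\<le>D. \<Sum>j\<le>D. \<Sum>k\<le>D. ?m i j k)"
      by (rule sum.cong[OF refl], rule sum.swap)
    also have "\<dots> = 0"
      using arg_cong[OF dep, of "\<lambda>H. poly2 H z"] by simp
    finally show ?thesis .
  qed
  have "\<exists>k\<le>D. A k \<noteq> 0"
  proof -
    obtain i j k where ijk: "i \<le> D" "j \<le> D" "k \<le> D" "c i j k \<noteq> 0"
      using c by blast
    have "coeff (coeff (A k) j) i = c i j k"
      unfolding A_def by (rule coeff_coeff_sum_monom[OF ijk(1,2)])
    then show ?thesis using ijk by force
  qed
  then obtain K where K: "K \<le> D" "A K \<noteq> 0" "\<And>k. K < k \<Longrightarrow> k \<le> D \<Longrightarrow> A k = 0"
    using obtain_leading_index by blast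
  show ?thesis
  proof (rule that[of A K, OF K(2)])
    fix z
    have "(\<Sum>k\<le>D. poly2 (A k) (Complex (poly2 P z) (poly2 Q z)) * poly2 R z ^ k)
        = (\<Sum>k\<le>K. poly2 (A k) (Complex (poly2 P z) (poly2 Q z)) * poly2 R z ^ k)"
      using K by (intro sum.mono_neutral_right) auto
    then show "(\<Sum>k\<le>K. poly2 (A k) (Complex (poly2 P z) (poly2 Q z)) * poly2 R z ^ k) = 0"
      using rel[of z] by simp
  qed
qed

section \<open>The cluster set at infinity\<close>

lemma abs_root_le_Cauchy_bound:
  fixes a :: "nat \<Rightarrow> real"
  assumes root: "(\<Sum>k\<le>K. a k * x ^ k) = 0" and lead: "a K \<noteq> 0"
  shows "\<bar>x\<bar> \<le> 1 + (\<Sum>k<K. \<bar>a k\<bar>) / \<bar>a K\<bar>"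
proof (cases K)
  case 0
  then show ?thesis using root lead by simp
next
  case (Suc K')
  have bound_nonneg: "0 \<le> (\<Sum>k<K. \<bar>a k\<bar>) / \<bar>a K\<bar>" by (simp add: sum_nonneg)
  show ?thesis
  proof (cases "\<bar>x\<bar> \<le> 1")
    case True
    then show ?thesis using bound_nonneg by linarith
  next
    case False
    have "a K * x ^ K = - (\<Sum>k<K. a k * x ^ k)"
      using root by (simp add: lessThan_Suc_atMost[symmetric] Suc)
    then have "\<bar>a K\<bar> * \<bar>x\<bar> ^ K = \<bar>\<Sum>k<K. a k * x ^ k\<bar>"
      by (metis abs_minus_cancel abs_mult power_abs)
    also have "\<dots> \<le> (\<Sum>k<K. \<bar>a k\<bar> * \<bar>x\<bar> ^ K')"
      using False Suc by (intro order_trans[OF sum_abs] sum_mono)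
        (auto simp: abs_mult power_abs intro!: mult_left_mono power_increasing)
    also have "\<dots> = (\<Sum>k<K. \<bar>a k\<bar>) * \<bar>x\<bar> ^ K'"
      by (simp add: sum_distrib_right)
    finally have "\<bar>a K\<bar> * \<bar>x\<bar> * \<bar>x\<bar> ^ K' \<le> (\<Sum>k<K. \<bar>a k\<bar>) * \<bar>x\<bar> ^ K'"
      unfolding Suc by (simp add: algebra_simps)
    then have "\<bar>a K\<bar> * \<bar>x\<bar> \<le> (\<Sum>k<K. \<bar>a k\<bar>)"
      using False by (simp add: mult_le_cancel_right)
    then show ?thesis
      using lead by (simp add: field_simps)
  qed
qed

lemma eventually_bounded_roots:
  fixes a :: "nat \<Rightarrow> nat \<Rightarrow> real"
  assumes root: "\<And>n. (\<Sum>k\<le>K. a k n * x n ^ k) = 0"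
    and lim: "\<And>k. (\<lambda>n. a k n) \<longlonglongrightarrow> b k" and lead: "b K \<noteq> 0"
  shows "\<exists>B. eventually (\<lambda>n. \<bar>x n\<bar> \<le> B) sequentially"
proof -
  define bound where "bound = (\<lambda>c :: nat \<Rightarrow> real. 1 + (\<Sum>k<K. \<bar>c k\<bar>) / \<bar>c K\<bar>)"
  have "(\<lambda>n. bound (\<lambda>k. a k n)) \<longlonglongrightarrow> bound b"
    unfolding bound_def using lead by (intro tendsto_intros lim) auto
  then have "eventually (\<lambda>n. bound (\<lambda>k. a k n) < bound b + 1) sequentially"
    by (rule order_tendstoD) simp
  moreover have "eventually (\<lambda>n. a K n \<noteq> 0) sequentially"
    using tendsto_imp_eventually_ne[OF lim lead] .
  ultimately have "eventually (\<lambda>n. \<bar>x n\<bar> \<le> bound b + 1) sequentially"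
  proof eventually_elim
    case (elim n)
    then show ?case
      using abs_root_le_Cauchy_bound[OF root elim(2)] by (simp add: bound_def)
  qed
  then show ?thesis by blast
qed

lemma eventually_bounded_roots_poly2:
  assumes rel: "\<And>z. (\<Sum>k\<le>K. poly2 (A k) (f z) * t z ^ k) = 0"
    and lim: "(\<lambda>n. f (zs n)) \<longlonglongrightarrow> w" and lead: "poly2 (A K) w \<noteq> 0"
  shows "\<exists>B. eventually (\<lambda>n. \<bar>t (zs n)\<bar> \<le> B) sequentially"
proof (rule eventually_bounded_roots[OF rel])
  show "(\<lambda>n. poly2 (A k) (f (zs n))) \<longlonglongrightarrow> poly2 (A k) w" for k
    using isCont_tendsto_compose[OF isCont_poly2 lim] .
qed (fact lead)

lemma harmonic_poly_Re_Im_poly2: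
  assumes f: "\<And>z. f z = poly p z + cnj (poly q z)"
  obtains U V where "bidegree_le (max (degree p) (degree q)) U"
    "bidegree_le (max (degree p) (degree q)) V" "\<And>z. Complex (poly2 U z) (poly2 V z) = f z"
proof -
  obtain Rp Ip where p: "bidegree_le (degree p) Rp" "bidegree_le (degree p) Ip"
    "\<And>z. poly2 Rp z = Re (poly p z)" "\<And>z. poly2 Ip z = Im (poly p z)"
    using poly2_Re_Im_poly[of p] by blast
  obtain Rq Iq where q: "bidegree_le (degree q) Rq" "bidegree_le (degree q) Iq"
    "\<And>z. poly2 Rq z = Re (poly q z)" "\<And>z. poly2 Iq z = Im (poly q z)"
    using poly2_Re_Im_poly[of q] by blast
  show ?thesis
  proof (rule that[of "Rp + Rq" "Ip - Iq"])
    show "bidegree_le (max (degree p) (degree q)) (Rp + Rq)"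
      "bidegree_le (max (degree p) (degree q)) (Ip - Iq)"
      using p(1,2) q(1,2) by (auto intro!: bidegree_le_add bidegree_le_diff elim!: bidegree_le_mono)
    show "Complex (poly2 (Rp + Rq) z) (poly2 (Ip - Iq) z) = f z" for z
      using p(3,4) q(3,4) f by (simp add: complex_eq_iff)
  qed
qed

lemma poly2_algebraic_over_harmonic_poly:
  assumes f: "\<And>z. f z = poly p z + cnj (poly q z)" and T: "bidegree_le m T"
  obtains K A where "A K \<noteq> 0" "\<And>z. (\<Sum>k\<le>K. poly2 (A k) (f z) * poly2 T z ^ k) = 0"
proof -
  define n where "n = max (max (degree p) (degree q)) m"
  obtain U V where "bidegree_le (max (degree p) (degree q)) U"
    "bidegree_le (max (degree p) (degree q)) V" and UV: "\<And>z. Complex (poly2 U z) (poly2 V z) = f z"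
    using harmonic_poly_Re_Im_poly2[OF f] by blast
  then have "bidegree_le n U" "bidegree_le n V" "bidegree_le n T"
    using T by (auto simp: n_def elim!: bidegree_le_mono)
  from poly2_algebraically_dependent[OF this] that show ?thesis
    unfolding UV by blast
qed

lemma cluster_set_inf_harmonic_poly_subset_zeros:
  assumes f: "\<And>z. f z = poly p z + cnj (poly q z)"
  obtains E where "E \<noteq> 0" "cluster_set_inf f \<subseteq> {w. poly2 E w = 0}"
proof -
  obtain Kx Ax where Ax: "Ax Kx \<noteq> 0" "\<And>z. (\<Sum>k\<le>Kx. poly2 (Ax k) (f z) * poly2 poly2_Re z ^ k) = 0"
    using poly2_algebraic_over_harmonic_poly[OF f bidegree_le_coordinates(1)] by metis
  obtain Ky Ay where Ay: "Ay Ky \<noteq> 0" "\<And>z. (\<Sum>k\<le>Ky. poly2 (Ay k) (f z) * poly2 poly2_Im z ^ k) = 0"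
    using poly2_algebraic_over_harmonic_poly[OF f bidegree_le_coordinates(2)] by metis
  show ?thesis
  proof (rule that[of "Ax Kx * Ay Ky"])
    show "Ax Kx * Ay Ky \<noteq> 0" using Ax(1) Ay(1) by simp
    show "cluster_set_inf f \<subseteq> {w. poly2 (Ax Kx * Ay Ky) w = 0}"
    proof (rule subsetI, rule ccontr)
      fix w assume "w \<in> cluster_set_inf f" and "w \<notin> {w. poly2 (Ax Kx * Ay Ky) w = 0}"
      then obtain zs where zs: "filterlim (\<lambda>n. norm (zs n)) at_top sequentially"
          "(\<lambda>n. f (zs n)) \<longlonglongrightarrow> w" and lead: "poly2 (Ax Kx) w \<noteq> 0" "poly2 (Ay Ky) w \<noteq> 0"
        by (auto simp: cluster_set_inf_def)
      obtain Bx where "eventually (\<lambda>n. \<bar>Re (zs n)\<bar> \<le> Bx) sequentially"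
        using eventually_bounded_roots_poly2[where t = Re, OF Ax(2)[unfolded poly2_coordinates] zs(2) lead(1)] by blast
      moreover obtain By where "eventually (\<lambda>n. \<bar>Im (zs n)\<bar> \<le> By) sequentially"
        using eventually_bounded_roots_poly2[where t = Im, OF Ay(2)[unfolded poly2_coordinates] zs(2) lead(2)] by blast
      moreover have "eventually (\<lambda>n. Bx + By + 1 \<le> norm (zs n)) sequentially"
        using zs(1) by (simp add: filterlim_at_top)
      ultimately have "eventually (\<lambda>n. False) sequentially"
      proof eventually_elim
        case (elim n)
        then show ?case using cmod_le[of "zs n"] by linarith
      qed
      then show False by simp
    qed
  qed
qed

lemma interior_negligible_Un_poly2_zeros:
  assumes N: "negligible N" and E: "E \<noteq> 0" and Z: "Z \<subseteq> {w. poly2 E w = 0}"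
  shows "interior (N \<union> Z) = {}"
proof (rule ccontr)
  assume "interior (N \<union> Z) \<noteq> {}"
  then obtain c r where "r > 0" and ball: "ball c r \<subseteq> N \<union> Z"
    by (auto simp: mem_interior)
  define U where "U = ball c r \<inter> {w. poly2 E w \<noteq> 0}"
  have "open U"
    unfolding U_def using isCont_poly2
    by (intro open_Int open_ball open_Collect_neq continuous_at_imp_continuous_on continuous_on_const) auto
  moreover have "negligible U"
    using ball Z by (intro negligible_subset[OF N]) (auto simp: U_def)
  ultimately have "U = {}" using open_not_negligible by blast
  then have "E = 0"
    using \<open>r > 0\<close> by (intro poly2_eq_0_on_ball[of r c]) (auto simp: U_def)
  with E show False ..
qed

theorem corollary5p11:
  fixes p q :: "complex poly" and f :: "complex \<Rightarrow> complex"
  assumes "\<And>z. f z = poly p z + cnj (poly q z)"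
  shows "interior (f ` crit_set f \<union> cluster_set_inf f) = {}"
proof -
  have "f = (\<lambda>z. poly p z + cnj (poly q z))" using assms by (simp add: fun_eq_iff)
  then have "f differentiable (at z)" for z by (simp add: harmonic_poly_differentiable)
  then have "negligible (f ` crit_set f)" by (rule negligible_image_crit_set)
  moreover obtain E where "E \<noteq> 0" "cluster_set_inf f \<subseteq> {w. poly2 E w = 0}"
    using cluster_set_inf_harmonic_poly_subset_zeros[OF assms] by blast
  ultimately show ?thesis by (rule interior_negligible_Un_poly2_zeros)
qed

end
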